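(* Let $\eta=\pi/3$, $L\ge3$, $1\le i\le L-1$, and $u,x,x_j\in\mathbb{C}$ ($j\ne i,i+1$). Let $s=e_1\otimes e_2-e_2\otimes e_1\in\mathbb{C}^2\otimes\mathbb{C}^2$. Then for every vector $v\in(\mathbb{C}^2)^{\otimes(L-2)}$ (placed on the sites other than $i,i+1$), \[ T_L(u\,|\,x_1,\ldots,x_{i-1},x,x+2\eta,x_{i+2},\ldots,x_L)\,\big(v\otimes s_{i,i+1}\big) = r(x-u)\,r(x+2\eta-u)\ \big(T_{L-2}(u\,|\,x_1,\ldots,x_{i-1},x_{i+2},\ldots,x_L)\,v\big)\otimes s_{i,i+1}, \] where $s_{i,i+1}$ denotes $s$ placed on sites $i,i+1$ and $T_{L-2}$ acts on the sites other than $i,i+1$ (in their induced order).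
   Context: Theta functions with nome $p^2$, where $p=e^{i\pi\tau}$, $\operatorname{Im}\tau>0$: $\theta_1(x;q)=2\sum_{n\ge0}(-1)^nq^{(n+1/2)^2}\sin((2n+1)x)$, $\theta_4(x;q)=1+2\sum_{n\ge1}(-1)^nq^{n^2}\cos(2nx)$, $q=p^2$. Boltzmann weights: $a(x)=\theta_4(2\eta;p^2)\theta_4(x;p^2)\theta_1(x+2\eta;p^2)$, $b(x)=\theta_4(2\eta;p^2)\theta_1(x;p^2)\theta_4(x+2\eta;p^2)$, $c(x)=\theta_1(2\eta;p^2)\theta_4(x;p^2)\theta_4(x+2\eta;p^2)$, $d(x)=\theta_1(2\eta;p^2)\theta_1(x;p^2)\theta_1(x+2\eta;p^2)$, and $r(x)=\theta_4(0;p^2)\theta_1(x+\eta;p^2)\theta_4(x+\eta;p^2)$. $R(x)$ is the operator on $\mathbb{C}^2\otimes\mathbb{C}^2$ whose matrix in the basis $e_1\otimes e_1,e_1\otimes e_2,e_2\otimes e_1,e_2\otimes e_2$ is $\begin{pmatrix}a&0&0&d\\0&b&c&0\\0&c&b&0\\d&0&0&a\end{pmatrix}(x)$. On $\mathbb{C}^2_0\otimes(\mathbb{C}^2)^{\otimes L}$ (auxiliary space $0$ and sites $1,\ldots,L$), $R_{0j}(x)$ denotes $R(x)$ acting on factors $0$ and $j$. The transfer matrix is the operator on $(\mathbb{C}^2)^{\otimes L}$ \[ T_L(u\,|\,x_1,\ldots,x_L)=\operatorname{Tr}_0\big(R_{0L}(x_L-u)\,R_{0,L-1}(x_{L-1}-u)\cdots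 R_{01}(x_1-u)\big), \] (operator composition, so $R_{01}$ is applied first), $\operatorname{Tr}_0$ being the partial trace over the auxiliary space. *)

theory Defs
  imports Complex_Main
begin

text \<open>Theta functions with nome q = p^2 = exp(2 pi i tau), p = exp(i pi tau).
  q^((n+1/2)^2) is read as exp(2 pi i tau (n+1/2)^2).\<close>

definition theta1 :: "complex \<Rightarrow> complex \<Rightarrow> complex" where
  "theta1 \<tau> z = 2 * (\<Sum>n. (-1) ^ n * exp (2 * pi * \<i> * \<tau> * (of_nat n + 1/2)^2)
                              * sin ((2 * of_nat n + 1) * z))"

definition theta4 :: "complex \<Rightarrow> complex \<Rightarrow> complex" where
  "theta4 \<tau> z = 1 + 2 * (\<Sum>n. (-1) ^ (Suc n) * exp (2 * pi * \<i> * \<tau> * (of_nat (Suc n))^2)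
                              * cos (2 * of_nat (Suc n) * z))"

definition wa :: "complex \<Rightarrow> complex \<Rightarrow> complex \<Rightarrow> complex" where
  "wa \<tau> \<eta> z = theta4 \<tau> (2*\<eta>) * theta4 \<tau> z * theta1 \<tau> (z + 2*\<eta>)"
definition wb :: "complex \<Rightarrow> complex \<Rightarrow> complex \<Rightarrow> complex" where
  "wb \<tau> \<eta> z = theta4 \<tau> (2*\<eta>) * theta1 \<tau> z * theta4 \<tau> (z + 2*\<eta>)"
definition wc :: "complex \<Rightarrow> complex \<Rightarrow> complex \<Rightarrow> complex" where
  "wc \<tau> \<eta> z = theta1 \<tau> (2*\<eta>) * theta4 \<tau> z * theta4 \<tau> (z + 2*\<eta>)"
definition wd :: "complex \<Rightarrow> complex \<Rightarrow> complex \<Rightarrow> complex" where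
  "wd \<tau> \<eta> z = theta1 \<tau> (2*\<eta>) * theta1 \<tau> z * theta1 \<tau> (z + 2*\<eta>)"
definition wr :: "complex \<Rightarrow> complex \<Rightarrow> complex \<Rightarrow> complex" where
  "wr \<tau> \<eta> z = theta4 \<tau> 0 * theta1 \<tau> (z + \<eta>) * theta4 \<tau> (z + \<eta>)"

text \<open>Basis of C^2: e1 = False, e2 = True.  Matrix entry
  R(z)[(o1,o2),(i1,i2)] = coefficient of e_o1 (x) e_o2 in R(z)(e_i1 (x) e_i2).\<close>

definition Rent :: "complex \<Rightarrow> complex \<Rightarrow> complex \<Rightarrow> bool \<times> bool \<Rightarrow> bool \<times> bool \<Rightarrow> complex" where
  "Rent \<tau> \<eta> z o' i' =
     (if o' = i' then (if fst o' = snd o' then wa \<tau> \<eta> z else wb \<tau> \<eta> z)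
      else if fst o' \<noteq> fst i' \<and> snd o' \<noteq> snd i'
        then (if fst i' = snd i' then wd \<tau> \<eta> z else wc \<tau> \<eta> z)
      else 0)"

text \<open>Monodromy matrix entry (aux out, aux in) for R_{0L}(x_L-u)...R_{01}(x_1-u),
  with R_{01} applied first; sites given by the lists (out states, in states).\<close>

fun mono :: "complex \<Rightarrow> complex \<Rightarrow> complex \<Rightarrow> complex list \<Rightarrow> bool list \<Rightarrow> bool list
              \<Rightarrow> bool \<Rightarrow> bool \<Rightarrow> complex" where
  "mono \<tau> \<eta> u [] [] [] a' a = (if a' = a then 1 else 0)"
| "mono \<tau> \<eta> u (x # xs) (s' # ss') (s # ss) a' a =
     (\<Sum>b\<in>UNIV. mono \<tau> \<eta> u xs ss' ss a' b * Rent \<tau> \<eta> (x - u) (b, s') (a, s))"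
| "mono \<tau> \<eta> u _ _ _ a' a = 0"

definition transfer_entry :: "complex \<Rightarrow> complex \<Rightarrow> complex \<Rightarrow> complex list \<Rightarrow> bool list \<Rightarrow> bool list \<Rightarrow> complex" where
  "transfer_entry \<tau> \<eta> u xs \<sigma>' \<sigma> = (\<Sum>a\<in>UNIV. mono \<tau> \<eta> u xs \<sigma>' \<sigma> a a)"

text \<open>Vectors in (C^2)^(tensor L) are functions on bool lists of length L.
  transfer \<tau> \<eta> u xs is T_L(u | xs) with L = length xs.\<close>

definition transfer :: "complex \<Rightarrow> complex \<Rightarrow> complex \<Rightarrow> complex list \<Rightarrow> (bool list \<Rightarrow> complex) \<Rightarrow> bool list \<Rightarrow> complex" where
  "transfer \<tau> \<eta> u xs v \<sigma>' =
     (\<Sum>\<sigma>\<in>{\<sigma>. length \<sigma> = length xs}. transfer_entry \<tau> \<eta> u xs \<sigma>' \<sigma> * v \<sigma>)"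

definition singlet :: "bool \<Rightarrow> bool \<Rightarrow> complex" where
  "singlet a b = (if \<not> a \<and> b then 1 else if a \<and> \<not> b then -1 else 0)"

text \<open>v placed on the sites other than k+1, k+2 (1-based), s placed on sites k+1,k+2.\<close>
definition insert_singlet :: "nat \<Rightarrow> (bool list \<Rightarrow> complex) \<Rightarrow> bool list \<Rightarrow> complex" where
  "insert_singlet k v \<sigma> = v (take k \<sigma> @ drop (k + 2) \<sigma>) * singlet (\<sigma> ! k) (\<sigma> ! Suc k)"

end

theory Submission
  imports Defs "HOL-Analysis.Analysis"
begin

(* Write \<theta>4(\<tau>; z) and \<theta>1(\<tau>; z) as sums \<Theta>_e(\<tau>/2; z + \<pi>/2) of the Gaussian terms
   exp(\<pi>i t j^2 + i j z) over the integers j of a fixed parity e.  The substitution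
   (j, k) \<mapsto> ((j+k)/2, (j-k)/2) turns a product of two such sums into a bilinear expression in
   \<Theta>_0, \<Theta>_1 with doubled nome; this yields product formulas for \<theta>1(a)\<theta>1(b) and \<theta>4(a)\<theta>4(b)
   in terms of \<Theta>_e(\<tau>; a+b) and \<Theta>_e(\<tau>; a-b).  For \<eta> = \<pi>/3 the arguments \<plusminus>2\<eta>, \<plusminus>4\<eta> give the
   same values of \<Theta>_e, and the two fusion identities
     a(y) b(y+2\<eta>) - c(y) c(y+2\<eta>) = b(y) a(y+2\<eta>) - d(y) d(y+2\<eta>) = r(y) r(y+2\<eta>)
   become polynomial identities between six numbers.

   The fusion identities say that R(y) R(y+2\<eta>) maps the auxiliary space
   tensored with the singlet to K times itself, K = r(y) r(y+2\<eta>).  An induction along the chain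
   of sites preceding the fused pair then lets the singlet pass through the whole monodromy
   matrix, which gives the theorem after taking the trace. *)


section \<open>Gaussian sums over a parity class of integers\<close>

definition gauss_term :: "complex \<Rightarrow> int \<Rightarrow> complex \<Rightarrow> complex" where
  "gauss_term t j z = exp (of_real pi * \<i> * t * (of_int j)^2 + \<i> * of_int j * z)"

definition parity_theta :: "complex \<Rightarrow> int \<Rightarrow> complex \<Rightarrow> complex" where
  "parity_theta t e z = (\<Sum>\<^sub>\<infinity>j\<in>{j::int. j mod 2 = e}. gauss_term t j z)"

lemma norm_gauss_term:
  "norm (gauss_term t j z) = exp (- (pi * Im t) * (real_of_int j)^2 - real_of_int j * Im z)"
  unfolding gauss_term_def by (simp add: norm_exp_eq_Re algebra_simps)

lemma int_UNIV_split: "(UNIV :: int set) = range int \<union> range (\<lambda>n. - int (Suc n))"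
proof -
  have "j \<in> range int \<union> range (\<lambda>n. - int (Suc n))" for j :: int
  proof (cases "j \<ge> 0")
    case True then show ?thesis by (metis UnI1 nonneg_int_cases rangeI)
  next
    case False
    then have "j = - int (Suc (nat (- j - 1)))" by simp
    then show ?thesis by blast
  qed
  then show ?thesis by blast
qed

lemma geometric_int_summable:
  fixes q :: real assumes "0 \<le> q" "q < 1"
  shows "(\<lambda>j::int. q ^ nat \<bar>j\<bar>) summable_on UNIV"
proof -
  have gs: "summable (\<lambda>n. norm (q ^ n))" using assms by (simp add: summable_geometric)
  have pos: "(\<lambda>j::int. q ^ nat \<bar>j\<bar>) summable_on range int"
    by (subst summable_on_reindex)
       (use gs in \<open>auto simp: o_def intro: norm_summable_imp_summable_on\<close>)
  have "(\<lambda>j::int. q ^ nat \<bar>j\<bar>) \<circ> (\<lambda>n. - int (Suc n)) = (\<lambda>n. q ^ Suc n)"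
    by (rule ext) (simp add: nat_add_distrib)
  moreover have "summable (\<lambda>n. norm (q ^ Suc n))" using gs by (subst summable_Suc_iff)
  moreover have "inj (\<lambda>n. - int (Suc n))" by (auto simp: inj_def)
  ultimately have neg: "(\<lambda>j::int. q ^ nat \<bar>j\<bar>) summable_on range (\<lambda>n. - int (Suc n))"
    by (subst summable_on_reindex) (auto intro: norm_summable_imp_summable_on)
  have "range int \<inter> range (\<lambda>n. - int (Suc n)) = {}" by auto
  then show ?thesis using summable_on_Un_disjoint[OF pos neg] int_UNIV_split by simp
qed

text \<open>For Im t > 0 the Gaussian terms are absolutely summable: completing the square bounds them
  by a constant times e^{-|j|}.\<close>

lemma gauss_term_abs_summable:
  assumes "Im t > 0"
  shows "(\<lambda>j. norm (gauss_term t j z)) summable_on (UNIV::int set)"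
proof -
  define A where "A = pi * Im t"
  define K where "K = \<bar>Im z\<bar> + 1"
  have A: "A > 0" using assms by (simp add: A_def)
  have bound: "- A * (real_of_int j)^2 - real_of_int j * Im z \<le> K^2/(4*A) - \<bar>real_of_int j\<bar>" for j
  proof -
    define w where "w = \<bar>real_of_int j\<bar>"
    have square: "(real_of_int j)^2 = w^2" by (simp add: w_def)
    have "- real_of_int j * Im z \<le> \<bar>Im z\<bar> * w" unfolding w_def
      by (metis abs_ge_minus_self abs_minus_cancel abs_mult mult.commute mult_minus_left)
    moreover have "0 \<le> (K - 2*A*w)^2/(4*A)" using A by simp
    moreover have "(K - 2*A*w)^2/(4*A) = K^2/(4*A) - K*w + A*w^2" using A
      by (simp add: field_simps power2_eq_square)
    moreover have "K*w = \<bar>Im z\<bar>*w + w" by (simp add: K_def algebra_simps)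
    ultimately have "- A * w^2 - real_of_int j * Im z \<le> K^2/(4*A) - w" by linarith
    then show ?thesis unfolding square w_def .
  qed
  have dom: "(\<lambda>j::int. exp (K^2/(4*A)) * exp (-1) ^ nat \<bar>j\<bar>) summable_on UNIV"
    by (rule summable_on_cmult_right, rule geometric_int_summable) auto
  show ?thesis
  proof (rule summable_on_comparison_test[OF dom])
    fix j :: int
    have "exp (-1) ^ nat \<bar>j\<bar> = exp (- \<bar>real_of_int j\<bar>)"
      by (metis exp_of_nat_mult mult_minus1_right of_nat_nat abs_ge_zero of_int_abs of_int_of_nat_eq)
    then have "exp (K^2/(4*A)) * exp (-1) ^ nat \<bar>j\<bar> = exp (K^2/(4*A) - \<bar>real_of_int j\<bar>)"
      by (simp add: exp_diff exp_minus field_simps)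
    then show "norm (gauss_term t j z) \<le> exp (K^2/(4*A)) * exp (-1) ^ nat \<bar>j\<bar>"
      using bound[of j] by (simp add: norm_gauss_term A_def)
  qed simp
qed

lemma gauss_term_summable:
  assumes "Im t > 0"
  shows "(\<lambda>j. gauss_term t j z) summable_on A"
proof -
  have "(\<lambda>j. gauss_term t j z) summable_on UNIV"
    using gauss_term_abs_summable[OF assms] summable_on_iff_abs_summable_on_complex by blast
  then show ?thesis by (rule summable_on_subset_banach) simp
qed

lemma infsum_product:
  fixes f g :: "_ \<Rightarrow> complex"
  assumes f: "f summable_on A" and g: "g summable_on B"
  shows "(\<lambda>(x,y). f x * g y) summable_on A \<times> B"
    and "(\<Sum>\<^sub>\<infinity>(x,y)\<in>A \<times> B. f x * g y) = infsum f A * infsum g B"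
proof -
  have af: "(\<lambda>x. norm (f x)) summable_on A" using f summable_on_iff_abs_summable_on_complex by blast
  have ag: "(\<lambda>x. norm (g x)) summable_on B" using g summable_on_iff_abs_summable_on_complex by blast
  have "(\<lambda>p. norm ((\<lambda>(x,y). f x * g y) p)) summable_on Sigma A (\<lambda>_. B)"
    unfolding Infinite_Sum.abs_summable_on_Sigma_iff
  proof (intro conjI ballI)
    fix x assume "x \<in> A"
    show "(\<lambda>y. norm (case (x, y) of (x, y) \<Rightarrow> f x * g y)) summable_on B"
      using summable_on_cmult_right[OF ag, of "norm (f x)"] by (simp add: norm_mult)
  next
    have "(\<Sum>\<^sub>\<infinity>y\<in>B. norm (case (x, y) of (x, y) \<Rightarrow> f x * g y))
        = norm (f x) * (\<Sum>\<^sub>\<infinity>y\<in>B. norm (g y))" for x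
      by (simp add: norm_mult infsum_cmult_right')
    moreover have "(\<lambda>x. norm (norm (f x) * (\<Sum>\<^sub>\<infinity>y\<in>B. norm (g y)))) summable_on A"
      using summable_on_cmult_left[OF af, of "\<Sum>\<^sub>\<infinity>y\<in>B. norm (g y)"]
      by (simp add: infsum_nonneg abs_mult)
    ultimately show "(\<lambda>x. norm (\<Sum>\<^sub>\<infinity>y\<in>B. norm (case (x, y) of (x, y) \<Rightarrow> f x * g y))) summable_on A"
      by simp
  qed
  then show S: "(\<lambda>(x,y). f x * g y) summable_on A \<times> B"
    using summable_on_iff_abs_summable_on_complex by blast
  have "(\<Sum>\<^sub>\<infinity>x\<in>A. \<Sum>\<^sub>\<infinity>y\<in>B. f x * g y) = (\<Sum>\<^sub>\<infinity>(x,y)\<in>A \<times> B. f x * g y)"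
    using infsum_Sigma_banach[of "\<lambda>(x,y). f x * g y" A "\<lambda>_. B"] S by simp
  then show "(\<Sum>\<^sub>\<infinity>(x,y)\<in>A \<times> B. f x * g y) = infsum f A * infsum g B"
    by (simp add: infsum_cmult_right' infsum_cmult_left')
qed

lemma gauss_term_mult:
  "gauss_term t (p + r) a * gauss_term t (p - r) b = gauss_term (2*t) p (a+b) * gauss_term (2*t) r (a-b)"
  unfolding gauss_term_def exp_add[symmetric]
  by (rule arg_cong[where f=exp]) (simp add: power2_eq_square algebra_simps)

lemma infsum_same_parity_pairs:
  assumes c: "c = 0 \<or> c = 1"
  shows "(\<Sum>\<^sub>\<infinity>(j,k)\<in>{j::int. j mod 2 = c} \<times> {k. k mod 2 = c}. g j k)
       = (\<Sum>\<^sub>\<infinity>(p,r)\<in>{(p,r). (p+r) mod 2 = c}. g (p+r) (p-r))"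
proof (rule infsum_reindex_bij_witness[where i="\<lambda>(p,r). (p+r, p-r)"
                                       and j="\<lambda>(j,k). ((j+k) div 2, (j-k) div 2)"])
  fix jk assume "jk \<in> {j::int. j mod 2 = c} \<times> {k. k mod 2 = c}"
  then obtain j k where jk: "jk = (j,k)" "j mod 2 = c" "k mod 2 = c" by auto
  have j: "(j + k) div 2 + (j - k) div 2 = j" and k: "(j + k) div 2 - (j - k) div 2 = k"
    using jk c by (auto; presburger)+
  show "(case (case jk of (j, k) \<Rightarrow> ((j + k) div 2, (j - k) div 2)) of (p, r) \<Rightarrow> (p + r, p - r)) = jk"
    using jk j k by simp
  show "(case jk of (j, k) \<Rightarrow> ((j + k) div 2, (j - k) div 2)) \<in> {(p, r). (p + r) mod 2 = c}"
    using jk c by (auto; presburger)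
  show "(case (case jk of (j, k) \<Rightarrow> ((j + k) div 2, (j - k) div 2)) of (p, r) \<Rightarrow> g (p + r) (p - r))
      = (case jk of (j, k) \<Rightarrow> g j k)"
    using jk j k by simp
next
  fix pr assume "pr \<in> {(p, r). (p + r) mod 2 = c}"
  then obtain p r where pr: "pr = (p,r)" "(p+r) mod 2 = c" by auto
  then show "(case case pr of (p, r) \<Rightarrow> (p + r, p - r) of (j, k) \<Rightarrow> ((j + k) div 2, (j - k) div 2)) = pr"
    by auto
  show "(case pr of (p, r) \<Rightarrow> (p + r, p - r)) \<in> {j::int. j mod 2 = c} \<times> {k. k mod 2 = c}"
    using pr c by (auto; presburger)
qed

text \<open>Product formula for the parity sums.  After the substitution above, p + r \<equiv> c means
  p even and r \<equiv> c, or p odd and r \<equiv> 1 - c, and each term factors by gauss_term_mult.\<close>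

lemma parity_theta_mult:
  assumes t: "Im t > 0" and c: "c = 0 \<or> c = 1"
  shows "parity_theta t c a * parity_theta t c b
       = parity_theta (2*t) 0 (a+b) * parity_theta (2*t) c (a-b)
       + parity_theta (2*t) 1 (a+b) * parity_theta (2*t) (1-c) (a-b)"
proof -
  define E where "E e = {j::int. j mod 2 = e}" for e
  define F where "F = (\<lambda>(p,r). gauss_term (2*t) p (a+b) * gauss_term (2*t) r (a-b))"
  have t2: "Im (2*t) > 0" using t by simp
  have "parity_theta t c a * parity_theta t c b
      = (\<Sum>\<^sub>\<infinity>(j,k)\<in>E c \<times> E c. gauss_term t j a * gauss_term t k b)"
    unfolding parity_theta_def E_def
    by (rule infsum_product(2)[symmetric]; rule gauss_term_summable[OF t])
  also have "\<dots> = infsum F {(p,r). (p+r) mod 2 = c}"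
    unfolding E_def infsum_same_parity_pairs[OF c] F_def gauss_term_mult ..
  also have "{(p,r). (p+r) mod 2 = c} = E 0 \<times> E c \<union> E 1 \<times> E (1-c)"
    using c unfolding E_def by (auto; presburger)
  also have "infsum F (E 0 \<times> E c \<union> E 1 \<times> E (1-c)) = infsum F (E 0 \<times> E c) + infsum F (E 1 \<times> E (1-c))"
    unfolding F_def
    by (rule infsum_Un_disjoint; (rule infsum_product(1); rule gauss_term_summable[OF t2])?)
       (auto simp: E_def)
  also have "\<dots> = parity_theta (2*t) 0 (a+b) * parity_theta (2*t) c (a-b)
                + parity_theta (2*t) 1 (a+b) * parity_theta (2*t) (1-c) (a-b)"
    unfolding parity_theta_def E_def F_def
    by (subst infsum_product(2); (rule gauss_term_summable[OF t2])?)+ (rule refl)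
  finally show ?thesis .
qed

lemma parity_theta_uminus: "parity_theta t e (- z) = parity_theta t e z"
  unfolding parity_theta_def
proof (rule infsum_reindex_bij_witness[where i=uminus and j=uminus])
  fix j :: int assume "j \<in> {j. j mod 2 = e}"
  then show "- (- j) = j" "- j \<in> {j. j mod 2 = e}" by (auto; presburger)+
  show "gauss_term t (- j) z = gauss_term t j (- z)" unfolding gauss_term_def by simp
next
  fix j :: int assume "j \<in> {j. j mod 2 = e}"
  then show "- (- j) = j" "- j \<in> {j. j mod 2 = e}" by (auto; presburger)+
qed

lemma exp_i_pi_int: "exp (\<i> * of_int j * of_real pi) = (if even j then 1 else -1)"
proof -
  have "exp (\<i> * of_int j * of_real pi) = exp (of_int j * (\<i> * of_real pi))" by (simp only: mult_ac)
  also have "\<dots> = exp (\<i> * of_real pi) powi j" by (rule exp_power_int[symmetric])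
  finally show ?thesis by (simp add: power_int_minus_left)
qed

lemma parity_theta_shift_pi:
  assumes "e = 0 \<or> e = 1"
  shows "parity_theta t e (z + of_real pi) = (if e = 0 then 1 else -1) * parity_theta t e z"
proof -
  have "gauss_term t j (z + of_real pi) = (if e = 0 then 1 else -1) * gauss_term t j z"
    if "j mod 2 = e" for j
  proof -
    have "gauss_term t j (z + of_real pi) = gauss_term t j z * exp (\<i> * of_int j * of_real pi)"
      unfolding gauss_term_def exp_add[symmetric] by (simp add: algebra_simps)
    also have "exp (\<i> * of_int j * of_real pi) = (if e = 0 then 1 else -1)"
      using that assms by (auto simp: exp_i_pi_int; presburger)
    finally show ?thesis by simp
  qed
  then show ?thesis
    unfolding parity_theta_def infsum_cmult_right'[symmetric] by (intro infsum_cong) auto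
qed

lemma parity_theta_shift_2pi:
  assumes "e = 0 \<or> e = 1"
  shows "parity_theta t e (z + 2 * of_real pi) = parity_theta t e z"
  using parity_theta_shift_pi[OF assms, of t "z + of_real pi"] parity_theta_shift_pi[OF assms, of t z]
  by (auto simp: add.assoc)


section \<open>The theta functions as parity sums\<close>

lemma sums_symmetric_ranges:
  fixes f :: "int \<Rightarrow> complex" and h :: "nat \<Rightarrow> int"
  assumes f: "f summable_on UNIV" and h: "inj h" and disjoint: "\<And>m n. h m \<noteq> - h n"
  shows "(\<lambda>n. f (h n) + f (- h n)) sums infsum f (range h \<union> range (\<lambda>n. - h n))"
proof -
  have sums_range: "(\<lambda>n. f (g n)) sums infsum f (range g)" if g: "inj g" for g :: "nat \<Rightarrow> int"
  proof -
    have "f summable_on range g" using f by (rule summable_on_subset_banach) simp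
    then have "(f has_sum infsum f (range g)) (range g)" by (rule has_sum_infsum)
    then have "((f \<circ> g) has_sum infsum f (range g)) UNIV"
      using has_sum_reindex[of g UNIV f] g by simp
    then show ?thesis by (auto dest: has_sum_imp_sums simp: o_def)
  qed
  have "inj (\<lambda>n. - h n)" using h by (auto simp: inj_def)
  moreover have "infsum f (range h \<union> range (\<lambda>n. - h n))
      = infsum f (range h) + infsum f (range (\<lambda>n. - h n))"
    by (rule infsum_Un_disjoint) (use f disjoint in \<open>auto intro: summable_on_subset_banach\<close>)
  ultimately show ?thesis using sums_add[OF sums_range[OF h]] sums_range by simp
qed

lemma gauss_pair_even:
  "gauss_term (\<tau>/2) (2 * int m) (z + of_real pi/2) + gauss_term (\<tau>/2) (- (2 * int m)) (z + of_real pi/2)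
   = 2 * ((-1) ^ m * exp (2 * of_real pi * \<i> * \<tau> * (of_nat m)^2) * cos (2 * of_nat m * z))"
proof -
  have m1: "(-1::complex) ^ m = exp (of_nat m * (\<i> * of_real pi))" by (simp add: exp_of_nat_mult)
  have m2: "(-1::complex) ^ m = exp (of_nat m * (- (\<i> * of_real pi)))"
    by (simp add: exp_of_nat_mult exp_minus flip: power_inverse)
  have a: "gauss_term (\<tau>/2) (2 * int m) (z + of_real pi/2)
      = exp (2 * of_real pi * \<i> * \<tau> * (of_nat m)^2) * exp (\<i> * (2 * of_nat m * z)) * (-1) ^ m"
    unfolding gauss_term_def m1 exp_add[symmetric]
    by (rule arg_cong[where f=exp]) (simp add: algebra_simps power2_eq_square)
  have b: "gauss_term (\<tau>/2) (- (2 * int m)) (z + of_real pi/2)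
      = exp (2 * of_real pi * \<i> * \<tau> * (of_nat m)^2) * exp (- (\<i> * (2 * of_nat m * z))) * (-1) ^ m"
    unfolding gauss_term_def m2 exp_add[symmetric]
    by (rule arg_cong[where f=exp]) (simp add: algebra_simps power2_eq_square)
  show ?thesis unfolding a b cos_exp_eq by (simp add: algebra_simps)
qed

lemma gauss_pair_odd:
  "gauss_term (\<tau>/2) (2 * int n + 1) (z + of_real pi/2) + gauss_term (\<tau>/2) (- (2 * int n + 1)) (z + of_real pi/2)
   = - 2 * ((-1) ^ n * exp (2 * of_real pi * \<i> * \<tau> * (of_nat n + 1/2)^2) * sin ((2 * of_nat n + 1) * z))"
proof -
  have i_half: "exp (\<i> * (of_real pi / 2)) = \<i>"
    using cis_pi_half cis_conv_exp by (metis of_real_divide of_real_numeral)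
  then have m1: "\<i> * (-1::complex) ^ n = exp (\<i> * (of_real pi / 2) + of_nat n * (\<i> * of_real pi))"
    unfolding exp_add by (simp add: exp_of_nat_mult)
  have "exp (- (\<i> * (of_real pi / 2))) = - \<i>" unfolding exp_minus i_half by simp
  then have m2: "- \<i> * (-1::complex) ^ n
      = exp (- (\<i> * (of_real pi / 2)) + of_nat n * (- (\<i> * of_real pi)))"
    unfolding exp_add by (simp add: exp_of_nat_mult exp_minus flip: power_inverse)
  have a: "gauss_term (\<tau>/2) (2 * int n + 1) (z + of_real pi/2)
      = exp (2 * of_real pi * \<i> * \<tau> * (of_nat n + 1/2)^2) * exp (\<i> * ((2 * of_nat n + 1) * z))
        * (\<i> * (-1) ^ n)"
    unfolding gauss_term_def m1 exp_add[symmetric]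
    by (rule arg_cong[where f=exp]) (simp add: algebra_simps power2_eq_square)
  have b: "gauss_term (\<tau>/2) (- (2 * int n + 1)) (z + of_real pi/2)
      = exp (2 * of_real pi * \<i> * \<tau> * (of_nat n + 1/2)^2) * exp (- (\<i> * ((2 * of_nat n + 1) * z)))
        * (- \<i> * (-1) ^ n)"
    unfolding gauss_term_def m2 exp_add[symmetric]
    by (rule arg_cong[where f=exp]) (simp add: algebra_simps power2_eq_square)
  have "E * X * (\<i> * s) + E * Y * (- \<i> * s) = - 2 * (s * E * ((X - Y) / (2 * \<i>)))"
    for E X Y s :: complex
    by (simp add: field_simps)
  then show ?thesis unfolding a b sin_exp_eq .
qed

text \<open>\<theta>4(\<tau>; z) = \<Theta>_0(\<tau>/2; z + \<pi>/2): the term j = 0 gives 1 and the pairs \<plusminus>2(n+1) give the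
  cosine series.\<close>

lemma theta4_parity_theta:
  assumes "Im \<tau> > 0"
  shows "theta4 \<tau> z = parity_theta (\<tau>/2) 0 (z + of_real pi/2)"
proof -
  define f where "f j = gauss_term (\<tau>/2) j (z + of_real pi/2)" for j
  define h where "h n = 2 * int (Suc n)" for n
  define T where "T n = (-1) ^ (Suc n) * exp (2 * of_real pi * \<i> * \<tau> * (of_nat (Suc n))^2)
                        * cos (2 * of_nat (Suc n) * z)" for n
  define S where "S = range h \<union> range (\<lambda>n. - h n)"
  have f: "f summable_on UNIV" unfolding f_def by (rule gauss_term_summable) (use assms in simp)
  have evens: "{j::int. j mod 2 = 0} = {0} \<union> S"
  proof (intro set_eqI iffI)
    fix j :: int assume "j \<in> {j. j mod 2 = 0}"
    then have "j = 0 \<or> j = h (nat (\<bar>j\<bar> div 2 - 1)) \<or> j = - h (nat (\<bar>j\<bar> div 2 - 1))"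
      unfolding h_def by (cases "j > 0"; auto; presburger)
    then show "j \<in> {0} \<union> S" unfolding S_def by blast
  qed (auto simp: S_def h_def)
  have "inj h" "\<And>m n. h m \<noteq> - h n" unfolding h_def inj_def by auto
  then have "(\<lambda>n. 2 * T n) sums infsum f S"
    using sums_symmetric_ranges[OF f, of h] gauss_pair_even[of \<tau> "Suc _" z]
    by (simp add: S_def h_def f_def T_def)
  then have "suminf T = infsum f S / 2"
    using sums_divide[of "\<lambda>n. 2 * T n" _ 2] by (simp add: sums_iff)
  moreover have "parity_theta (\<tau>/2) 0 (z + of_real pi/2) = f 0 + infsum f S"
    unfolding parity_theta_def f_def[symmetric] evens
    by (subst infsum_Un_disjoint) (use f in \<open>auto simp: S_def h_def intro: summable_on_subset_banach\<close>)
  moreover have "f 0 = 1" by (simp add: f_def gauss_term_def)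
  moreover have "theta4 \<tau> z = 1 + 2 * suminf T" unfolding theta4_def T_def by simp
  ultimately show ?thesis by (simp add: mult.commute)
qed

text \<open>\<theta>1(\<tau>; z) = -\<Theta>_1(\<tau>/2; z + \<pi>/2): the pairs \<plusminus>(2n+1) give the sine series.\<close>

lemma theta1_parity_theta:
  assumes "Im \<tau> > 0"
  shows "theta1 \<tau> z = - parity_theta (\<tau>/2) 1 (z + of_real pi/2)"
proof -
  define f where "f j = gauss_term (\<tau>/2) j (z + of_real pi/2)" for j
  define h where "h n = 2 * int n + 1" for n
  define T where "T n = (-1) ^ n * exp (2 * of_real pi * \<i> * \<tau> * (of_nat n + 1/2)^2)
                        * sin ((2 * of_nat n + 1) * z)" for n
  have f: "f summable_on UNIV" unfolding f_def by (rule gauss_term_summable) (use assms in simp)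
  have odds: "{j::int. j mod 2 = 1} = range h \<union> range (\<lambda>n. - h n)"
  proof (intro set_eqI iffI)
    fix j :: int assume "j \<in> {j. j mod 2 = 1}"
    then have "j = h (nat (\<bar>j\<bar> div 2)) \<or> j = - h (nat (\<bar>j\<bar> div 2))"
      unfolding h_def by (cases "j > 0"; auto; presburger)
    then show "j \<in> range h \<union> range (\<lambda>n. - h n)" by blast
  qed (auto simp: h_def; presburger)
  have "inj h" "\<And>m n. h m \<noteq> - h n" unfolding h_def inj_def by linarith+
  then have "(\<lambda>n. - 2 * T n) sums infsum f (range h \<union> range (\<lambda>n. - h n))"
    using sums_symmetric_ranges[OF f, of h] gauss_pair_odd[of \<tau>] by (simp add: h_def f_def T_def)
  then have "(\<lambda>n. - 2 * T n) sums parity_theta (\<tau>/2) 1 (z + of_real pi/2)"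
    unfolding parity_theta_def odds f_def .
  then have "T sums (- parity_theta (\<tau>/2) 1 (z + of_real pi/2) / 2)"
    using sums_divide[of "\<lambda>n. - 2 * T n" _ "- 2"] by simp
  then show ?thesis unfolding theta1_def T_def by (simp add: sums_iff)
qed

text \<open>The shift of the sum argument by \<pi> comes from the
  shifts by \<pi>/2 in the parity-sum representation.\<close>

lemma theta1_mult:
  assumes "Im \<tau> > 0" "a + b = s" "a - b = d"
  shows "theta1 \<tau> a * theta1 \<tau> b
       = parity_theta \<tau> 0 s * parity_theta \<tau> 1 d - parity_theta \<tau> 1 s * parity_theta \<tau> 0 d"
proof -
  have t: "Im (\<tau>/2) > 0" using assms by simp
  have sum: "(a + of_real pi/2) + (b + of_real pi/2) = s + of_real pi" using assms(2) by simp
  have diff: "(a + of_real pi/2) - (b + of_real pi/2) = d" using assms(3) by simp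
  have "theta1 \<tau> a * theta1 \<tau> b
      = parity_theta (\<tau>/2) 1 (a + of_real pi/2) * parity_theta (\<tau>/2) 1 (b + of_real pi/2)"
    using theta1_parity_theta[OF assms(1)] by simp
  also have "\<dots> = parity_theta \<tau> 0 (s + of_real pi) * parity_theta \<tau> 1 d
                + parity_theta \<tau> 1 (s + of_real pi) * parity_theta \<tau> 0 d"
    using parity_theta_mult[OF t, of 1 "a + of_real pi/2" "b + of_real pi/2", unfolded sum diff]
    by simp
  also have "\<dots> = parity_theta \<tau> 0 s * parity_theta \<tau> 1 d - parity_theta \<tau> 1 s * parity_theta \<tau> 0 d"
    using parity_theta_shift_pi[of 0] parity_theta_shift_pi[of 1] by simp
  finally show ?thesis .
qed

lemma theta4_mult:
  assumes "Im \<tau> > 0" "a + b = s" "a - b = d"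
  shows "theta4 \<tau> a * theta4 \<tau> b
       = parity_theta \<tau> 0 s * parity_theta \<tau> 0 d - parity_theta \<tau> 1 s * parity_theta \<tau> 1 d"
proof -
  have t: "Im (\<tau>/2) > 0" using assms by simp
  have sum: "(a + of_real pi/2) + (b + of_real pi/2) = s + of_real pi" using assms(2) by simp
  have diff: "(a + of_real pi/2) - (b + of_real pi/2) = d" using assms(3) by simp
  have "theta4 \<tau> a * theta4 \<tau> b
      = parity_theta (\<tau>/2) 0 (a + of_real pi/2) * parity_theta (\<tau>/2) 0 (b + of_real pi/2)"
    using theta4_parity_theta[OF assms(1)] by simp
  also have "\<dots> = parity_theta \<tau> 0 (s + of_real pi) * parity_theta \<tau> 0 d
                + parity_theta \<tau> 1 (s + of_real pi) * parity_theta \<tau> 1 d"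
    using parity_theta_mult[OF t, of 0 "a + of_real pi/2" "b + of_real pi/2", unfolded sum diff]
    by simp
  also have "\<dots> = parity_theta \<tau> 0 s * parity_theta \<tau> 0 d - parity_theta \<tau> 1 s * parity_theta \<tau> 1 d"
    using parity_theta_shift_pi[of 0] parity_theta_shift_pi[of 1] by simp
  finally show ?thesis .
qed


section \<open>The fusion identities at \<eta> = \<pi>/3\<close>

text \<open>For \<eta> = \<pi>/3 we have 2\<eta> = -4\<eta> + 2\<pi>, so by periodicity and evenness the parity sums take
  one and the same value at \<plusminus>2\<eta> and \<plusminus>4\<eta>.\<close>

lemma parity_theta_third_period:
  assumes "\<eta> = of_real (pi/3)" "e = 0 \<or> e = 1"
  shows "parity_theta \<tau> e (- 4 * \<eta>) = parity_theta \<tau> e (2 * \<eta>)"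
    and "parity_theta \<tau> e (4 * \<eta>) = parity_theta \<tau> e (2 * \<eta>)"
    and "parity_theta \<tau> e (- 2 * \<eta>) = parity_theta \<tau> e (2 * \<eta>)"
proof -
  have "2 * \<eta> = - 4 * \<eta> + 2 * of_real pi" using assms(1) by (simp add: field_simps)
  then have "parity_theta \<tau> e (2 * \<eta>) = parity_theta \<tau> e (- 4 * \<eta> + 2 * of_real pi)"
    by (rule arg_cong)
  then show minus4: "parity_theta \<tau> e (- 4 * \<eta>) = parity_theta \<tau> e (2 * \<eta>)"
    unfolding parity_theta_shift_2pi[OF assms(2)] ..
  show "parity_theta \<tau> e (4 * \<eta>) = parity_theta \<tau> e (2 * \<eta>)"
    using parity_theta_uminus[of \<tau> e "- 4 * \<eta>"] minus4 by simp
  show "parity_theta \<tau> e (- 2 * \<eta>) = parity_theta \<tau> e (2 * \<eta>)"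
    using parity_theta_uminus[of \<tau> e "2 * \<eta>"] by simp
qed

text \<open>Every product of two theta values occurring in them is, by the
  product formulas, a bilinear form in the parity sums at 2y + 4\<eta>, at 2\<eta> and at 0; the identities
  then hold as polynomial identities in these six numbers.\<close>

lemma fusion_identities:
  assumes t: "Im \<tau> > 0" and eta: "\<eta> = of_real (pi/3)"
  shows "wa \<tau> \<eta> y * wb \<tau> \<eta> (y + 2*\<eta>) - wc \<tau> \<eta> y * wc \<tau> \<eta> (y + 2*\<eta>)
           = wr \<tau> \<eta> y * wr \<tau> \<eta> (y + 2*\<eta>)"
    and "wb \<tau> \<eta> y * wa \<tau> \<eta> (y + 2*\<eta>) - wd \<tau> \<eta> y * wd \<tau> \<eta> (y + 2*\<eta>)
           = wr \<tau> \<eta> y * wr \<tau> \<eta> (y + 2*\<eta>)"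
proof -
  define R0 where "R0 = parity_theta \<tau> 0 (2*y + 4*\<eta>)"
  define R1 where "R1 = parity_theta \<tau> 1 (2*y + 4*\<eta>)"
  define S0 where "S0 = parity_theta \<tau> 0 (2*\<eta>)"
  define S1 where "S1 = parity_theta \<tau> 1 (2*\<eta>)"
  define k0 where "k0 = parity_theta \<tau> 0 0"
  define k1 where "k1 = parity_theta \<tau> 1 0"
  note third = parity_theta_third_period[OF eta, of 0] parity_theta_third_period[OF eta, of 1]
  have p1: "theta4 \<tau> (2*\<eta>) * theta4 \<tau> (2*\<eta>) = S0*k0 - S1*k1"
    using theta4_mult[OF t, of "2*\<eta>" "2*\<eta>" "4*\<eta>" 0] third by (simp add: S0_def S1_def k0_def k1_def)
  have p2: "theta1 \<tau> (2*\<eta>) * theta1 \<tau> (2*\<eta>) = S0*k1 - S1*k0"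
    using theta1_mult[OF t, of "2*\<eta>" "2*\<eta>" "4*\<eta>" 0] third by (simp add: S0_def S1_def k0_def k1_def)
  have p3: "theta4 \<tau> y * theta4 \<tau> (y + 2*\<eta> + 2*\<eta>) = R0*S0 - R1*S1"
    using theta4_mult[OF t, of y "y + 2*\<eta> + 2*\<eta>" "2*y + 4*\<eta>" "- 4*\<eta>"] third
    by (simp add: S0_def S1_def R0_def R1_def)
  have p4: "theta1 \<tau> y * theta1 \<tau> (y + 2*\<eta> + 2*\<eta>) = R0*S1 - R1*S0"
    using theta1_mult[OF t, of y "y + 2*\<eta> + 2*\<eta>" "2*y + 4*\<eta>" "- 4*\<eta>"] third
    by (simp add: S0_def S1_def R0_def R1_def)
  have p5: "theta1 \<tau> (y + 2*\<eta>) * theta1 \<tau> (y + 2*\<eta>) = R0*k1 - R1*k0"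
    using theta1_mult[OF t, of "y + 2*\<eta>" "y + 2*\<eta>" "2*y + 4*\<eta>" 0] by (simp add: R0_def R1_def k0_def k1_def)
  have p6: "theta4 \<tau> (y + 2*\<eta>) * theta4 \<tau> (y + 2*\<eta>) = R0*k0 - R1*k1"
    using theta4_mult[OF t, of "y + 2*\<eta>" "y + 2*\<eta>" "2*y + 4*\<eta>" 0] by (simp add: R0_def R1_def k0_def k1_def)
  have p7: "theta4 \<tau> 0 * theta4 \<tau> 0 = k0*k0 - k1*k1"
    using theta4_mult[OF t, of 0 0 0 0] by (simp add: k0_def k1_def)
  have p8: "theta1 \<tau> (y + \<eta>) * theta1 \<tau> (y + 2*\<eta> + \<eta>) = R0*S1 - R1*S0"
    using theta1_mult[OF t, of "y + \<eta>" "y + 2*\<eta> + \<eta>" "2*y + 4*\<eta>" "- 2*\<eta>"] third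
    by (simp add: S0_def S1_def R0_def R1_def)
  have p9: "theta4 \<tau> (y + \<eta>) * theta4 \<tau> (y + 2*\<eta> + \<eta>) = R0*S0 - R1*S1"
    using theta4_mult[OF t, of "y + \<eta>" "y + 2*\<eta> + \<eta>" "2*y + 4*\<eta>" "- 2*\<eta>"] third
    by (simp add: S0_def S1_def R0_def R1_def)
  show "wa \<tau> \<eta> y * wb \<tau> \<eta> (y + 2*\<eta>) - wc \<tau> \<eta> y * wc \<tau> \<eta> (y + 2*\<eta>)
      = wr \<tau> \<eta> y * wr \<tau> \<eta> (y + 2*\<eta>)"
    unfolding wa_def wb_def wc_def wr_def using p1 p2 p3 p5 p6 p7 p8 p9 by algebra
  show "wb \<tau> \<eta> y * wa \<tau> \<eta> (y + 2*\<eta>) - wd \<tau> \<eta> y * wd \<tau> \<eta> (y + 2*\<eta>)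
      = wr \<tau> \<eta> y * wr \<tau> \<eta> (y + 2*\<eta>)"
    unfolding wa_def wb_def wd_def wr_def using p1 p2 p4 p5 p6 p7 p8 p9 by algebra
qed


section \<open>Passing the singlet through the transfer matrix\<close>

definition mono_apply :: "complex \<Rightarrow> complex \<Rightarrow> complex \<Rightarrow> complex list \<Rightarrow> bool list \<Rightarrow> bool \<Rightarrow> bool
                          \<Rightarrow> (bool list \<Rightarrow> complex) \<Rightarrow> complex" where
  "mono_apply \<tau> \<eta> u xs \<sigma>' a' a V = (\<Sum>\<sigma>\<in>{\<sigma>. length \<sigma> = length xs}. mono \<tau> \<eta> u xs \<sigma>' \<sigma> a' a * V \<sigma>)"

lemma transfer_mono_apply: "transfer \<tau> \<eta> u xs V \<sigma>' = (\<Sum>a\<in>UNIV. mono_apply \<tau> \<eta> u xs \<sigma>' a a V)"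
  unfolding transfer_def transfer_entry_def mono_apply_def sum_distrib_right by (rule sum.swap)

lemma sum_length_Suc:
  "(\<Sum>\<sigma>\<in>{\<sigma>::bool list. length \<sigma> = Suc n}. f \<sigma>) = (\<Sum>s\<in>UNIV. \<Sum>\<rho>\<in>{\<rho>. length \<rho> = n}. f (s # \<rho>))"
proof -
  have "{\<sigma>::bool list. length \<sigma> = Suc n} = (\<lambda>(s,\<rho>). s # \<rho>) ` (UNIV \<times> {\<rho>. length \<rho> = n})"
  proof (intro set_eqI iffI)
    fix \<sigma> :: "bool list" assume "\<sigma> \<in> {\<sigma>. length \<sigma> = Suc n}"
    then obtain s \<rho> where "\<sigma> = s # \<rho>" "length \<rho> = n" by (auto simp: length_Suc_conv)
    then show "\<sigma> \<in> (\<lambda>(s,\<rho>). s # \<rho>) ` (UNIV \<times> {\<rho>. length \<rho> = n})" by force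
  qed auto
  moreover have "inj_on (\<lambda>(s,\<rho>). s # \<rho>) (UNIV \<times> {\<rho>::bool list. length \<rho> = n})"
    by (auto simp: inj_on_def)
  ultimately show ?thesis by (simp add: sum.reindex sum.cartesian_product split_def)
qed

lemma mono_apply_Cons:
  "mono_apply \<tau> \<eta> u (p # xs) (s' # \<rho>') a' a V
   = (\<Sum>b\<in>UNIV. \<Sum>s\<in>UNIV. Rent \<tau> \<eta> (p - u) (b, s') (a, s) * mono_apply \<tau> \<eta> u xs \<rho>' a' b (\<lambda>\<rho>. V (s # \<rho>)))"
proof -
  have "mono_apply \<tau> \<eta> u (p # xs) (s' # \<rho>') a' a V
     = (\<Sum>s\<in>UNIV. \<Sum>\<rho>\<in>{\<rho>. length \<rho> = length xs}. \<Sum>b\<in>UNIV.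
          Rent \<tau> \<eta> (p - u) (b, s') (a, s) * (mono \<tau> \<eta> u xs \<rho>' \<rho> a' b * V (s # \<rho>)))"
    unfolding mono_apply_def by (simp add: sum_length_Suc sum_distrib_right sum_distrib_left mult_ac)
  also have "\<dots> = (\<Sum>b\<in>UNIV. \<Sum>s\<in>UNIV. \<Sum>\<rho>\<in>{\<rho>. length \<rho> = length xs}.
          Rent \<tau> \<eta> (p - u) (b, s') (a, s) * (mono \<tau> \<eta> u xs \<rho>' \<rho> a' b * V (s # \<rho>)))"
    by (subst sum.swap, rule sum.cong[OF refl], rule sum.swap)
  finally show ?thesis unfolding mono_apply_def by (simp add: sum_distrib_left)
qed

lemma mono_apply_scale: "mono_apply \<tau> \<eta> u xs \<sigma>' a' a (\<lambda>\<rho>. V \<rho> * c) = c * mono_apply \<tau> \<eta> u xs \<sigma>' a' a V"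
  unfolding mono_apply_def by (simp add: sum_distrib_left mult_ac)

lemma insert_singlet_Cons:
  "(\<lambda>\<rho>. insert_singlet (Suc k) V (s # \<rho>)) = insert_singlet k (\<lambda>\<sigma>. V (s # \<sigma>))"
  unfolding insert_singlet_def by (rule ext) simp

text \<open>The remaining entries vanish because a(y) c(y+2\<eta>) = c(y) b(y+2\<eta>) and d(y) a(y+2\<eta>) = b(y) d(y+2\<eta>)
  hold identically.\<close>

lemma singlet_fusion:
  assumes "wa \<tau> \<eta> y * wb \<tau> \<eta> (y + 2*\<eta>) - wc \<tau> \<eta> y * wc \<tau> \<eta> (y + 2*\<eta>) = K"
    and "wb \<tau> \<eta> y * wa \<tau> \<eta> (y + 2*\<eta>) - wd \<tau> \<eta> y * wd \<tau> \<eta> (y + 2*\<eta>) = K"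
  shows "(\<Sum>b\<in>UNIV. \<Sum>s1\<in>UNIV. \<Sum>s2\<in>UNIV. Rent \<tau> \<eta> y (b, t1) (a, s1) * Rent \<tau> \<eta> (y + 2*\<eta>) (c, t2) (b, s2)
            * singlet s1 s2)
         = (if c = a then K else 0) * singlet t1 t2"
proof -
  have "wa \<tau> \<eta> y * wc \<tau> \<eta> (y + 2*\<eta>) = wc \<tau> \<eta> y * wb \<tau> \<eta> (y + 2*\<eta>)"
    "wd \<tau> \<eta> y * wa \<tau> \<eta> (y + 2*\<eta>) = wb \<tau> \<eta> y * wd \<tau> \<eta> (y + 2*\<eta>)"
    unfolding wa_def wb_def wc_def wd_def by (simp_all only: mult_ac)
  with assms show ?thesis
    by (cases t1; cases t2; cases a; cases c) (simp_all add: UNIV_bool Rent_def singlet_def algebra_simps)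
qed

lemma mono_apply_singlet:
  assumes fusion: "\<And>t1 t2 a c. (\<Sum>b\<in>UNIV. \<Sum>s1\<in>UNIV. \<Sum>s2\<in>UNIV. Rent \<tau> \<eta> (x - u) (b, t1) (a, s1)
         * Rent \<tau> \<eta> (x' - u) (c, t2) (b, s2) * singlet s1 s2) = (if c = a then K else 0) * singlet t1 t2"
    and "length \<sigma>1 = length pre"
  shows "mono_apply \<tau> \<eta> u (pre @ x # x' # post) (\<sigma>1 @ t1 # t2 # \<sigma>2) a' a (insert_singlet (length pre) v)
       = K * singlet t1 t2 * mono_apply \<tau> \<eta> u (pre @ post) (\<sigma>1 @ \<sigma>2) a' a v"
  using assms(2)
proof (induction pre arbitrary: \<sigma>1 v a)
  case Nil
  define P where "P c = mono_apply \<tau> \<eta> u post \<sigma>2 a' c v" for c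
  have singlet_first: "(\<lambda>\<rho>. insert_singlet 0 v (s1 # s2 # \<rho>)) = (\<lambda>\<rho>. v \<rho> * singlet s1 s2)" for s1 s2
    unfolding insert_singlet_def by simp
  have "mono_apply \<tau> \<eta> u (x # x' # post) (t1 # t2 # \<sigma>2) a' a (insert_singlet 0 v)
     = (\<Sum>b\<in>UNIV. \<Sum>s1\<in>UNIV. Rent \<tau> \<eta> (x - u) (b, t1) (a, s1) *
         (\<Sum>c\<in>UNIV. \<Sum>s2\<in>UNIV. Rent \<tau> \<eta> (x' - u) (c, t2) (b, s2) * (singlet s1 s2 * P c)))"
    unfolding mono_apply_Cons singlet_first mono_apply_scale P_def ..
  also have "\<dots> = (\<Sum>c\<in>UNIV. P c * (\<Sum>b\<in>UNIV. \<Sum>s1\<in>UNIV. \<Sum>s2\<in>UNIV.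
         Rent \<tau> \<eta> (x - u) (b, t1) (a, s1) * Rent \<tau> \<eta> (x' - u) (c, t2) (b, s2) * singlet s1 s2))"
    by (simp add: UNIV_bool algebra_simps)
  also have "\<dots> = K * singlet t1 t2 * P a"
    unfolding fusion by (cases a) (simp_all add: UNIV_bool)
  finally show ?case using Nil by (simp add: P_def)
next
  case (Cons p pre)
  then obtain s' \<rho>1 where \<sigma>1: "\<sigma>1 = s' # \<rho>1" and len: "length \<rho>1 = length pre"
    by (cases \<sigma>1) auto
  have "mono_apply \<tau> \<eta> u ((p # pre) @ x # x' # post) (\<sigma>1 @ t1 # t2 # \<sigma>2) a' a
          (insert_singlet (length (p # pre)) v)
     = (\<Sum>b\<in>UNIV. \<Sum>s\<in>UNIV. Rent \<tau> \<eta> (p - u) (b, s') (a, s) *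
          mono_apply \<tau> \<eta> u (pre @ x # x' # post) (\<rho>1 @ t1 # t2 # \<sigma>2) a' b
            (insert_singlet (length pre) (\<lambda>\<sigma>. v (s # \<sigma>))))"
    unfolding \<sigma>1 by (simp add: mono_apply_Cons insert_singlet_Cons)
  also have "\<dots> = (\<Sum>b\<in>UNIV. \<Sum>s\<in>UNIV. Rent \<tau> \<eta> (p - u) (b, s') (a, s) *
          (K * singlet t1 t2 * mono_apply \<tau> \<eta> u (pre @ post) (\<rho>1 @ \<sigma>2) a' b (\<lambda>\<sigma>. v (s # \<sigma>))))"
    using Cons.IH[OF len] by simp
  also have "\<dots> = K * singlet t1 t2 * mono_apply \<tau> \<eta> u ((p # pre) @ post) (\<sigma>1 @ \<sigma>2) a' a v"
    unfolding \<sigma>1 by (simp add: mono_apply_Cons sum_distrib_left mult_ac)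
  finally show ?case .
qed

lemma transfer_singlet:
  assumes fusion: "\<And>t1 t2 a c. (\<Sum>b\<in>UNIV. \<Sum>s1\<in>UNIV. \<Sum>s2\<in>UNIV. Rent \<tau> \<eta> (x - u) (b, t1) (a, s1)
         * Rent \<tau> \<eta> (x' - u) (c, t2) (b, s2) * singlet s1 s2) = (if c = a then K else 0) * singlet t1 t2"
    and len: "length \<sigma> = length pre + length post + 2"
  shows "transfer \<tau> \<eta> u (pre @ [x, x'] @ post) (insert_singlet (length pre) v) \<sigma>
         = K * insert_singlet (length pre) (transfer \<tau> \<eta> u (pre @ post) v) \<sigma>"
proof -
  define k where "k = length pre"
  define \<sigma>1 where "\<sigma>1 = take k \<sigma>"
  define \<sigma>2 where "\<sigma>2 = drop (k + 2) \<sigma>"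
  have \<sigma>: "\<sigma> = \<sigma>1 @ \<sigma> ! k # \<sigma> ! Suc k # \<sigma>2"
  proof -
    have "drop k \<sigma> = \<sigma> ! k # drop (Suc k) \<sigma>" using len k_def by (simp add: Cons_nth_drop_Suc)
    moreover have "drop (Suc k) \<sigma> = \<sigma> ! Suc k # \<sigma>2"
      using len k_def by (simp add: \<sigma>2_def Cons_nth_drop_Suc)
    ultimately show ?thesis unfolding \<sigma>1_def by (metis append_take_drop_id)
  qed
  have "transfer \<tau> \<eta> u (pre @ [x, x'] @ post) (insert_singlet (length pre) v) \<sigma>
      = (\<Sum>a\<in>UNIV. K * singlet (\<sigma> ! k) (\<sigma> ! Suc k) * mono_apply \<tau> \<eta> u (pre @ post) (\<sigma>1 @ \<sigma>2) a a v)"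
    unfolding transfer_mono_apply
    by (subst \<sigma>) (simp add: mono_apply_singlet[OF fusion] \<sigma>1_def k_def len)
  also have "\<dots> = K * insert_singlet (length pre) (transfer \<tau> \<eta> u (pre @ post) v) \<sigma>"
    unfolding insert_singlet_def transfer_mono_apply
    by (simp add: \<sigma>1_def \<sigma>2_def k_def mult_ac sum_distrib_left)
  finally show ?thesis .
qed


theorem mainTheorem8:
  fixes \<tau> u x :: complex and pre post :: "complex list" and v :: "bool list \<Rightarrow> complex"
  assumes "Im \<tau> > 0"
    and "length pre + length post + 2 \<ge> 3"
  shows "\<forall>\<sigma>. length \<sigma> = length pre + length post + 2 \<longrightarrow>
           transfer \<tau> (pi/3) u (pre @ [x, x + 2*(pi/3)] @ post)
              (insert_singlet (length pre) v) \<sigma>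
         = wr \<tau> (pi/3) (x - u) * wr \<tau> (pi/3) (x + 2*(pi/3) - u) *
           insert_singlet (length pre) (transfer \<tau> (pi/3) u (pre @ post) v) \<sigma>"
proof (intro allI impI)
  fix \<sigma> :: "bool list"
  assume len: "length \<sigma> = length pre + length post + 2"
  define \<eta> :: complex where "\<eta> = of_real (pi/3)"
  have shift: "x + 2 * \<eta> - u = (x - u) + 2 * \<eta>" by simp
  have "(\<Sum>b\<in>UNIV. \<Sum>s1\<in>UNIV. \<Sum>s2\<in>UNIV. Rent \<tau> \<eta> (x - u) (b, t1) (a, s1)
          * Rent \<tau> \<eta> (x + 2 * \<eta> - u) (c, t2) (b, s2) * singlet s1 s2)
        = (if c = a then wr \<tau> \<eta> (x - u) * wr \<tau> \<eta> (x + 2 * \<eta> - u) else 0) * singlet t1 t2"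
    for t1 t2 a c
    unfolding shift by (rule singlet_fusion) (use fusion_identities[OF assms(1) \<eta>_def] in auto)
  from transfer_singlet[OF this len] show "transfer \<tau> (pi/3) u (pre @ [x, x + 2*(pi/3)] @ post)
        (insert_singlet (length pre) v) \<sigma>
      = wr \<tau> (pi/3) (x - u) * wr \<tau> (pi/3) (x + 2*(pi/3) - u) *
        insert_singlet (length pre) (transfer \<tau> (pi/3) u (pre @ post) v) \<sigma>"
    unfolding \<eta>_def by (simp only: of_real_mult of_real_numeral)
qed

end
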